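(* Let $(X,d,\mu)$ be a metric measure space satisfying a Poincaré inequality of type $(1,p)$ for some $1\le p<\infty$. If $x\in X$ satisfies $\liminf_{r\to0}\mu(B_r(x))/r^p=0$, then $x$ is not a local cut point.
   Context: Here $(X,d)$ is a complete, locally compact length space with a Borel measure $\mu$ such that $0<\mu(B_r(x))<\infty$ for all $x\in X$, $0<r<\infty$ ($B_r(x)$ the open ball). Paths are assumed parametrized proportionally to arclength. For a function $u$ on $X$, a Borel function $g:X\to[0,\infty]$ is an upper gradient of $u$ if $|u(\gamma(l))-u(\gamma(0))|\le\int_0^l g(\gamma(t))\,dt$ for every path $\gamma:[0,l]\to X$. For $B\subset X$ write $u_B=\mu(B)^{-1}\int_B u\,d\mu$ and $\fint_B f\,d\mu=\mu(B)^{-1}\int_B f\,d\mu$. $(X,d,\mu)$ satisfies a Poincaré inequality of type $(1,p)$ if for every $R>0$ there is $C_P=C_P(p,R)>0$ such that $\fint_{B_r(x)}|u-u_{B_r(x)}|\,d\mu\le C_P\,r\big(\fint_{B_r(x)}g^p\,d\mu\big)^{1/p}$ for all $x\in X$, $0<r\le R$, all measurable functions $u$ and all upper gradients $g$ of $u$. A point $x\in X$ is a local cut point if $U\setminus\{x\}$ is disconnected for some connected neighborhood $U$ of $x$. *)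

theory Defs
  imports "HOL-Analysis.Analysis" "HOL-Probability.Probability"
begin

definition curve_length :: "(real \<Rightarrow> 'a::metric_space) \<Rightarrow> real \<Rightarrow> real \<Rightarrow> ennreal" where
  "curve_length \<gamma> a b =
     (SUP ts \<in> {ts. sorted ts \<and> set ts \<subseteq> {a..b}}.
        ennreal (sum_list (map2 (\<lambda>s t. dist (\<gamma> s) (\<gamma> t)) ts (tl ts))))"

definition length_space :: "'a::metric_space itself \<Rightarrow> bool" where
  "length_space _ \<longleftrightarrow> (\<forall>x y::'a. ennreal (dist x y) =
      (INF \<gamma> \<in> {\<gamma>. path \<gamma> \<and> pathstart \<gamma> = x \<and> pathfinish \<gamma> = y}. curve_length \<gamma> 0 1))"

definition arclength_path :: "(real \<Rightarrow> 'a::metric_space) \<Rightarrow> real \<Rightarrow> bool" where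
  "arclength_path \<gamma> l \<longleftrightarrow> 0 \<le> l \<and>
     (\<forall>s t. 0 \<le> s \<and> s \<le> t \<and> t \<le> l \<longrightarrow> curve_length \<gamma> s t = ennreal (t - s))"

definition upper_gradient :: "('a::metric_space \<Rightarrow> real) \<Rightarrow> ('a \<Rightarrow> ennreal) \<Rightarrow> bool" where
  "upper_gradient u g \<longleftrightarrow> g \<in> borel_measurable borel \<and>
     (\<forall>\<gamma> l. arclength_path \<gamma> l \<longrightarrow>
        ennreal \<bar>u (\<gamma> l) - u (\<gamma> 0)\<bar> \<le> (\<integral>\<^sup>+ t\<in>{0..l}. g (\<gamma> t) \<partial>lborel))"

text \<open>Real power on [0,\<infinity>], with \<infinity> powr p = \<infinity> (used for p > 0 only).\<close>
definition enn_powr :: "ennreal \<Rightarrow> real \<Rightarrow> ennreal" where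
  "enn_powr a p = (if a = \<infinity> then \<infinity> else ennreal (enn2real a powr p))"

text \<open>Mean value u_B (Bochner integral; only meaningful when u is integrable on B).\<close>
definition ball_mean :: "'a measure \<Rightarrow> 'a set \<Rightarrow> ('a \<Rightarrow> real) \<Rightarrow> real" where
  "ball_mean M B u = (\<integral>x\<in>B. u x \<partial>M) / measure M B"

text \<open>Poincare inequality of type (1,p). The left-hand side is the nonnegative integral of
 |u - u_B| divided by \<mu>(B); it is \<infinity> whenever u is not integrable on B.\<close>
definition poincare_1p :: "'a::metric_space measure \<Rightarrow> real \<Rightarrow> bool" where
  "poincare_1p M p \<longleftrightarrow> (\<forall>R>0. \<exists>C>0. \<forall>x r u g. 0 < r \<and> r \<le> R \<and>
      u \<in> borel_measurable M \<and> upper_gradient u g \<longrightarrow>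
      (\<integral>\<^sup>+ y\<in>ball x r. ennreal \<bar>u y - ball_mean M (ball x r) u\<bar> \<partial>M) / emeasure M (ball x r)
        \<le> ennreal (C * r) *
           enn_powr ((\<integral>\<^sup>+ y\<in>ball x r. enn_powr (g y) p \<partial>M) / emeasure M (ball x r)) (1 / p))"

definition local_cut_point :: "'a::topological_space \<Rightarrow> bool" where
  "local_cut_point x \<longleftrightarrow> (\<exists>U. connected U \<and> x \<in> interior U \<and> \<not> connected (U - {x}))"

end

theory Submission
  imports Defs
begin

text \<open>If \<open>x\<close> were a local cut point, some punctured ball \<open>ball x \<rho> - {x}\<close> would split into
  disjoint open pieces \<open>S1\<close> and \<open>S2\<close>, both accumulating at \<open>x\<close>. For small \<open>r\<close>, the function
  equal to \<open>min 1 (dist x z / r)\<close> on \<open>S1\<close> and to 0 elsewhere has an upper gradient that is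
  \<open>1 / r\<close> on \<open>ball x (2 * r)\<close>, 0 on the rest of \<open>cball x (\<rho> / 2)\<close> and \<open>\<infinity>\<close> beyond, and the
  infinite part is invisible to the Poincare inequality on \<open>ball x (\<rho> / 2)\<close>. On that ball the
  function is 1 on a fixed open part of \<open>S1\<close> and 0 on a fixed open part of \<open>S2\<close>, so the left
  side of the inequality is bounded below independently of \<open>r\<close>, while the right side is of order
  \<open>(\<mu>(ball x (2 * r)) / r powr p) powr (1 / p)\<close>. Hence \<open>\<mu>(ball x s) / s powr p\<close> stays bounded
  away from 0 as \<open>s \<rightarrow> 0\<close>, contradicting the hypothesis on its \<open>Liminf\<close>.\<close>

lemma arclength_path_dist_le:
  assumes "arclength_path \<gamma> l" "0 \<le> s" "s \<le> t" "t \<le> l"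
  shows "dist (\<gamma> s) (\<gamma> t) \<le> t - s"
proof -
  have "ennreal (dist (\<gamma> s) (\<gamma> t)) \<le> curve_length \<gamma> s t"
    unfolding curve_length_def by (rule SUP_upper2[of "[s,t]"]) (use assms in auto)
  also have "\<dots> = ennreal (t - s)"
    using assms unfolding arclength_path_def by auto
  finally show ?thesis
    using assms by simp
qed

lemma arclength_path_dist_le_abs:
  assumes "arclength_path \<gamma> l" "s \<in> {0..l}" "t \<in> {0..l}"
  shows "dist (\<gamma> s) (\<gamma> t) \<le> \<bar>s - t\<bar>"
  using arclength_path_dist_le[OF assms(1), of s t] arclength_path_dist_le[OF assms(1), of t s] assms
  by (cases "s \<le> t") (auto simp: dist_commute)

lemma continuous_on_arclength_path:
  assumes "arclength_path \<gamma> l"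
  shows "continuous_on {0..l} \<gamma>"
  unfolding continuous_on_iff
proof (intro ballI allI impI)
  fix t e :: real
  assume "t \<in> {0..l}" "0 < e"
  then show "\<exists>d>0. \<forall>s\<in>{0..l}. dist s t < d \<longrightarrow> dist (\<gamma> s) (\<gamma> t) < e"
    using arclength_path_dist_le_abs[OF assms] by (intro exI[of _ e]) (force simp: dist_real_def)
qed

lemma set_nn_integral_Icc_split:
  fixes G :: "real \<Rightarrow> ennreal"
  assumes [measurable]: "G \<in> borel_measurable borel" and "a \<le> b" "b \<le> c"
  shows "(\<integral>\<^sup>+t\<in>{a..b}. G t \<partial>lborel) + (\<integral>\<^sup>+t\<in>{b..c}. G t \<partial>lborel) = (\<integral>\<^sup>+t\<in>{a..c}. G t \<partial>lborel)"
proof -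
  have "(\<integral>\<^sup>+t\<in>{b..c}. G t \<partial>lborel) = (\<integral>\<^sup>+t\<in>{b<..c}. G t \<partial>lborel)"
    using AE_lborel_singleton[of b]
    by (intro nn_integral_cong_AE) (auto elim!: eventually_mono simp: indicator_def)
  also have "(\<integral>\<^sup>+t\<in>{a..b}. G t \<partial>lborel) + \<dots> = (\<integral>\<^sup>+t\<in>{a..b} \<union> {b<..c}. G t \<partial>lborel)"
    by (rule nn_integral_disjoint_pair[symmetric]) auto
  also have "{a..b} \<union> {b<..c} = {a..c}"
    using assms by auto
  finally show ?thesis .
qed

lemma abs_diff_le_set_nn_integral_trans:
  fixes h :: "real \<Rightarrow> real" and G :: "real \<Rightarrow> ennreal"
  assumes "G \<in> borel_measurable borel" "a \<le> b" "b \<le> c"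
    and "ennreal \<bar>h b - h a\<bar> \<le> (\<integral>\<^sup>+\<tau>\<in>{a..b}. G \<tau> \<partial>lborel)"
    and "ennreal \<bar>h c - h b\<bar> \<le> (\<integral>\<^sup>+\<tau>\<in>{b..c}. G \<tau> \<partial>lborel)"
  shows "ennreal \<bar>h c - h a\<bar> \<le> (\<integral>\<^sup>+\<tau>\<in>{a..c}. G \<tau> \<partial>lborel)"
proof -
  have "ennreal \<bar>h c - h a\<bar> \<le> ennreal (\<bar>h c - h b\<bar> + \<bar>h b - h a\<bar>)"
    by (rule ennreal_leI) linarith
  also have "\<dots> = ennreal \<bar>h c - h b\<bar> + ennreal \<bar>h b - h a\<bar>"
    by (simp add: ennreal_plus)
  also have "\<dots> \<le> (\<integral>\<^sup>+\<tau>\<in>{b..c}. G \<tau> \<partial>lborel) + (\<integral>\<^sup>+\<tau>\<in>{a..b}. G \<tau> \<partial>lborel)"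
    using assms(4,5) by (rule add_mono[rotated])
  also have "\<dots> = (\<integral>\<^sup>+\<tau>\<in>{a..c}. G \<tau> \<partial>lborel)"
    using set_nn_integral_Icc_split[OF assms(1-3)] by (simp add: add.commute)
  finally show ?thesis .
qed

lemma abs_diff_le_set_nn_integral_of_local:
  fixes h :: "real \<Rightarrow> real" and G :: "real \<Rightarrow> ennreal"
  assumes G: "G \<in> borel_measurable borel" and "0 \<le> l"
    and local: "\<And>t. t \<in> {0..l} \<Longrightarrow> \<exists>\<delta>>0. \<forall>s\<in>{0..l}. \<bar>s - t\<bar> < \<delta> \<longrightarrow>
        ennreal \<bar>h s - h t\<bar> \<le> (\<integral>\<^sup>+\<tau>\<in>{min s t..max s t}. G \<tau> \<partial>lborel)"
  shows "ennreal \<bar>h l - h 0\<bar> \<le> (\<integral>\<^sup>+\<tau>\<in>{0..l}. G \<tau> \<partial>lborel)"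
proof -
  define I where "I a b = (\<integral>\<^sup>+\<tau>\<in>{a..b}. G \<tau> \<partial>lborel)" for a b
  \<comment> \<open>Continuity induction: the supremum of the good endpoints is good, and it cannot lie below \<open>l\<close>.\<close>
  define S where "S = {t \<in> {0..l}. ennreal \<bar>h t - h 0\<bar> \<le> I 0 t}"
  have extend: "b \<in> S" if "a \<in> S" "a \<le> b" "b \<le> l" "ennreal \<bar>h b - h a\<bar> \<le> I a b" for a b
    using that abs_diff_le_set_nn_integral_trans[OF G, of 0 a b h] by (simp add: S_def I_def)
  have "0 \<in> S"
    using \<open>0 \<le> l\<close> by (simp add: S_def)
  have bdd: "bdd_above S"
    by (auto simp: S_def intro: bdd_aboveI[of _ l])
  define T where "T = Sup S"
  have T_upper: "t \<le> T" if "t \<in> S" for t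
    unfolding T_def using cSup_upper[OF that bdd] .
  have T: "T \<in> {0..l}"
    using T_upper[OF \<open>0 \<in> S\<close>] \<open>0 \<in> S\<close> unfolding T_def by (auto simp: S_def intro!: cSup_least)
  obtain \<delta> where "\<delta> > 0" and \<delta>: "\<And>s. s \<in> {0..l} \<Longrightarrow> \<bar>s - T\<bar> < \<delta> \<Longrightarrow>
      ennreal \<bar>h s - h T\<bar> \<le> I (min s T) (max s T)"
    using local[OF T] unfolding I_def by blast
  obtain T' where "T' \<in> S" "T - \<delta> < T'"
    using less_cSupD[of S "T - \<delta>"] \<open>0 \<in> S\<close> \<open>\<delta> > 0\<close> unfolding T_def by fastforce
  moreover have "T' \<le> T"
    using T_upper[OF \<open>T' \<in> S\<close>] .
  moreover have "T' \<in> {0..l}"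
    using \<open>T' \<in> S\<close> by (simp add: S_def)
  ultimately have "ennreal \<bar>h T - h T'\<bar> \<le> I T' T"
    using \<delta>[of T'] by (simp add: abs_minus_commute[of "h T"] min_absorb1 max_absorb2)
  then have "T \<in> S"
    using T \<open>T' \<in> S\<close> \<open>T' \<le> T\<close> extend[of T' T] by simp
  have "T = l"
  proof (rule ccontr)
    assume "T \<noteq> l"
    define s where "s = min l (T + \<delta>/2)"
    have "T < s" "s \<le> l"
      using T \<open>T \<noteq> l\<close> \<open>\<delta> > 0\<close> by (auto simp: s_def)
    moreover have "ennreal \<bar>h s - h T\<bar> \<le> I T s"
      using \<delta>[of s] T \<open>T < s\<close> \<open>s \<le> l\<close> \<open>\<delta> > 0\<close> by (simp add: s_def min_absorb2 max_absorb1)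
    ultimately have "s \<in> S"
      using \<open>T \<in> S\<close> extend[of T s] by simp
    then show False
      using T_upper \<open>T < s\<close> by force
  qed
  then show ?thesis
    using \<open>T \<in> S\<close> by (simp add: S_def I_def)
qed

lemma arclength_path_local_estimate:
  fixes u :: "'a::metric_space \<Rightarrow> real" and g :: "'a \<Rightarrow> ennreal" and G :: "real \<Rightarrow> ennreal"
  assumes \<gamma>: "arclength_path \<gamma> l" and s: "s \<in> {0..l}" "\<bar>s - t\<bar> < \<epsilon>" and t: "t \<in> {0..l}"
    and G: "\<And>\<tau>. \<tau> \<in> {0..l} \<Longrightarrow> G \<tau> = g (\<gamma> \<tau>)"
    and local: "\<And>z. dist z (\<gamma> t) < \<epsilon> \<Longrightarrow>
        g (\<gamma> t) \<le> g z \<and> ennreal \<bar>u z - u (\<gamma> t)\<bar> \<le> g (\<gamma> t) * ennreal (dist z (\<gamma> t))"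
  shows "ennreal \<bar>u (\<gamma> s) - u (\<gamma> t)\<bar> \<le> (\<integral>\<^sup>+\<tau>\<in>{min s t..max s t}. G \<tau> \<partial>lborel)"
proof -
  have near: "\<tau> \<in> {0..l} \<and> dist (\<gamma> \<tau>) (\<gamma> t) < \<epsilon>" if "\<tau> \<in> {min s t..max s t}" for \<tau>
  proof
    show "\<tau> \<in> {0..l}"
      using that s t by auto
    moreover have "\<bar>\<tau> - t\<bar> \<le> \<bar>s - t\<bar>"
      using that by (auto simp: min_def max_def split: if_splits)
    ultimately show "dist (\<gamma> \<tau>) (\<gamma> t) < \<epsilon>"
      using arclength_path_dist_le_abs[OF \<gamma> _ t, of \<tau>] s by linarith
  qed
  have "ennreal \<bar>u (\<gamma> s) - u (\<gamma> t)\<bar> \<le> g (\<gamma> t) * ennreal (dist (\<gamma> s) (\<gamma> t))"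
    using local near[of s] by simp
  also have "\<dots> \<le> g (\<gamma> t) * ennreal \<bar>s - t\<bar>"
    using arclength_path_dist_le_abs[OF \<gamma> s(1) t] by (intro mult_left_mono ennreal_leI) auto
  also have "\<dots> = (\<integral>\<^sup>+\<tau>. g (\<gamma> t) * indicator {min s t..max s t} \<tau> \<partial>lborel)"
    by (simp add: nn_integral_cmult_indicator min_def max_def abs_if)
  also have "\<dots> \<le> (\<integral>\<^sup>+\<tau>\<in>{min s t..max s t}. G \<tau> \<partial>lborel)"
    using local near G by (intro nn_integral_mono) (simp add: indicator_def)
  finally show ?thesis .
qed

lemma upper_gradientI_local:
  fixes u :: "'a::metric_space \<Rightarrow> real" and g :: "'a \<Rightarrow> ennreal"
  assumes g: "g \<in> borel_measurable borel"
    and local: "\<And>y. \<exists>\<epsilon>>0. \<forall>z. dist z y < \<epsilon> \<longrightarrow>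
        g y \<le> g z \<and> ennreal \<bar>u z - u y\<bar> \<le> g y * ennreal (dist z y)"
  shows "upper_gradient u g"
  unfolding upper_gradient_def
proof (intro conjI allI impI g)
  fix \<gamma> :: "real \<Rightarrow> 'a" and l
  assume \<gamma>: "arclength_path \<gamma> l"
  then have "0 \<le> l"
    by (simp add: arclength_path_def)
  \<comment> \<open>\<open>\<gamma>\<close> is only continuous on \<open>[0, l]\<close>; clamping the parameter gives a Borel integrand on \<open>\<real>\<close>.\<close>
  define c where "c t = max 0 (min l t)" for t :: real
  have c: "c t = t" if "t \<in> {0..l}" for t
    using that by (auto simp: c_def)
  have "continuous_on UNIV (\<gamma> \<circ> c)"
    using continuous_on_arclength_path[OF \<gamma>] \<open>0 \<le> l\<close> unfolding c_def
    by (intro continuous_on_compose continuous_intros) (auto intro: continuous_on_subset)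
  then have "\<gamma> \<circ> c \<in> borel_measurable borel"
    by (rule borel_measurable_continuous_onI)
  define G where "G t = g (\<gamma> (c t))" for t
  have G: "G \<in> borel_measurable borel"
    unfolding G_def using measurable_compose[OF \<open>\<gamma> \<circ> c \<in> borel_measurable borel\<close> g] by (simp add: comp_def)
  have G_eq: "G \<tau> = g (\<gamma> \<tau>)" if "\<tau> \<in> {0..l}" for \<tau>
    using that by (simp add: G_def c)
  have "ennreal \<bar>(u \<circ> \<gamma>) l - (u \<circ> \<gamma>) 0\<bar> \<le> (\<integral>\<^sup>+\<tau>\<in>{0..l}. G \<tau> \<partial>lborel)"
  proof (rule abs_diff_le_set_nn_integral_of_local[OF G \<open>0 \<le> l\<close>])
    fix t
    assume t: "t \<in> {0..l}"
    obtain \<epsilon> where "\<epsilon> > 0" and \<epsilon>: "\<And>z. dist z (\<gamma> t) < \<epsilon> \<Longrightarrow>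
        g (\<gamma> t) \<le> g z \<and> ennreal \<bar>u z - u (\<gamma> t)\<bar> \<le> g (\<gamma> t) * ennreal (dist z (\<gamma> t))"
      using local[of "\<gamma> t"] by blast
    then show "\<exists>\<delta>>0. \<forall>s\<in>{0..l}. \<bar>s - t\<bar> < \<delta> \<longrightarrow>
        ennreal \<bar>(u \<circ> \<gamma>) s - (u \<circ> \<gamma>) t\<bar> \<le> (\<integral>\<^sup>+\<tau>\<in>{min s t..max s t}. G \<tau> \<partial>lborel)"
      using arclength_path_local_estimate[where G = G and g = g, OF \<gamma> _ _ t G_eq] by auto
  qed
  also have "(\<integral>\<^sup>+\<tau>\<in>{0..l}. G \<tau> \<partial>lborel) = (\<integral>\<^sup>+\<tau>\<in>{0..l}. g (\<gamma> \<tau>) \<partial>lborel)"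
    by (rule nn_integral_cong) (simp add: G_eq indicator_def)
  finally show "ennreal \<bar>u (\<gamma> l) - u (\<gamma> 0)\<bar> \<le> (\<integral>\<^sup>+\<tau>\<in>{0..l}. g (\<gamma> \<tau>) \<partial>lborel)"
    by simp
qed

definition radial_cutoff :: "'a::metric_space set \<Rightarrow> 'a \<Rightarrow> real \<Rightarrow> 'a \<Rightarrow> real" where
  "radial_cutoff S x r z = (if z \<in> S then min 1 (dist x z / r) else 0)"

text \<open>The value \<open>\<infinity>\<close> outside \<open>cball x R\<close> makes the upper gradient condition vacuous there, so
  the cutoff needs no outer ramp.\<close>

definition cutoff_gradient :: "'a::metric_space \<Rightarrow> real \<Rightarrow> real \<Rightarrow> 'a \<Rightarrow> ennreal" where
  "cutoff_gradient x r R z =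
     (if dist x z < 2 * r then ennreal (1 / r) else if dist x z \<le> R then 0 else \<infinity>)"

lemma abs_min_1_divide_diff_le:
  fixes a b r :: real
  assumes "0 < r"
  shows "\<bar>min 1 (a / r) - min 1 (b / r)\<bar> \<le> \<bar>a - b\<bar> / r"
proof -
  have "\<bar>min 1 (a / r) - min 1 (b / r)\<bar> \<le> \<bar>a / r - b / r\<bar>"
    by (simp add: min_def abs_if)
  also have "\<dots> = \<bar>a - b\<bar> / r"
    using assms by (simp add: diff_divide_distrib[symmetric] abs_divide)
  finally show ?thesis .
qed

lemma radial_cutoff_local_bound:
  fixes x y :: "'a::metric_space"
  assumes S: "open S1" "open S2" "ball x \<rho> - {x} \<subseteq> S1 \<union> S2" "S1 \<inter> S2 \<inter> (ball x \<rho> - {x}) = {}"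
    and "dist x y < \<rho>"
  obtains \<epsilon> where "\<epsilon> > 0" "\<And>z. dist z y < \<epsilon> \<Longrightarrow> \<bar>radial_cutoff S1 x r z - radial_cutoff S1 x r y\<bar>
            \<le> \<bar>min 1 (dist x z / r) - min 1 (dist x y / r)\<bar>"
proof (cases "y = x")
  case True
  then show ?thesis
    using that[of 1] by (simp add: radial_cutoff_def)
next
  case False
  show ?thesis
  proof (cases "y \<in> S1")
    case True
    then obtain \<epsilon> where "\<epsilon> > 0" "ball y \<epsilon> \<subseteq> S1"
      using openE[OF S(1)] by blast
    then have "z \<in> S1" if "dist z y < \<epsilon>" for z
      using that by (metis dist_commute mem_ball subsetD)
    then show ?thesis
      using True \<open>\<epsilon> > 0\<close> that[of \<epsilon>] by (simp add: radial_cutoff_def)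
  next
    case False
    then have "y \<in> S2"
      using S(3) \<open>y \<noteq> x\<close> \<open>dist x y < \<rho>\<close> by auto
    then obtain e where "e > 0" "ball y e \<subseteq> S2"
      using openE[OF S(2)] by blast
    define \<epsilon> where "\<epsilon> = min e (min (\<rho> - dist x y) (dist x y))"
    have "z \<notin> S1" if "dist z y < \<epsilon>" for z
    proof -
      have "z \<in> S2"
        using that \<open>ball y e \<subseteq> S2\<close> by (auto simp: \<epsilon>_def dist_commute)
      moreover have "z \<in> ball x \<rho> - {x}"
        using that dist_triangle[of x z y] dist_triangle[of x y z] by (auto simp: \<epsilon>_def dist_commute)
      ultimately show ?thesis
        using S(4) by blast
    qed
    moreover have "\<epsilon> > 0"
      using \<open>e > 0\<close> \<open>dist x y < \<rho>\<close> \<open>y \<noteq> x\<close> by (simp add: \<epsilon>_def)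
    ultimately show ?thesis
      using False that[of \<epsilon>] by (simp add: radial_cutoff_def)
  qed
qed

lemma cutoff_gradient_locally_ge:
  fixes x y :: "'a::metric_space"
  assumes "2 * r \<le> R"
  shows "\<exists>\<epsilon>>0. \<forall>z. dist z y < \<epsilon> \<longrightarrow> cutoff_gradient x r R y \<le> cutoff_gradient x r R z"
proof -
  have d_near: "\<bar>dist x z - dist x y\<bar> \<le> dist z y" for z
    using abs_dist_diff_le[of z x y] by (simp add: dist_commute)
  consider "R < dist x y" | "dist x y < 2 * r" | "2 * r \<le> dist x y" "dist x y \<le> R"
    by linarith
  then show ?thesis
  proof cases
    case 1
    then have "cutoff_gradient x r R y \<le> cutoff_gradient x r R z" if "dist z y < dist x y - R" for z
      using d_near[of z] that assms by (simp add: cutoff_gradient_def abs_le_iff)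
    moreover have "0 < dist x y - R"
      using 1 by simp
    ultimately show ?thesis
      by blast
  next
    case 2
    then have "cutoff_gradient x r R y \<le> cutoff_gradient x r R z" if "dist z y < 2 * r - dist x y" for z
      using d_near[of z] that by (simp add: cutoff_gradient_def abs_le_iff)
    moreover have "0 < 2 * r - dist x y"
      using 2 by simp
    ultimately show ?thesis
      by blast
  next
    case 3
    then show ?thesis
      by (intro exI[of _ 1]) (simp add: cutoff_gradient_def)
  qed
qed

lemma radial_cutoff_locally_lipschitz:
  fixes x y :: "'a::metric_space"
  assumes S: "open S1" "open S2" "ball x \<rho> - {x} \<subseteq> S1 \<union> S2" "S1 \<inter> S2 \<inter> (ball x \<rho> - {x}) = {}"
    and r: "0 < r" "2 * r \<le> R" "R < \<rho>"
  shows "\<exists>\<epsilon>>0. \<forall>z. dist z y < \<epsilon> \<longrightarrow>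
    ennreal \<bar>radial_cutoff S1 x r z - radial_cutoff S1 x r y\<bar> \<le> cutoff_gradient x r R y * ennreal (dist z y)"
proof (cases "R < dist x y")
  case True
  have "ennreal \<bar>radial_cutoff S1 x r z - radial_cutoff S1 x r y\<bar> \<le> \<infinity> * ennreal (dist z y)" for z
    by (cases "z = y") (simp_all add: ennreal_top_mult)
  then show ?thesis
    using True r by (intro exI[of _ 1]) (simp add: cutoff_gradient_def)
next
  case False
  let ?u = "radial_cutoff S1 x r" and ?g = "cutoff_gradient x r R"
  have d_near: "\<bar>dist x z - dist x y\<bar> \<le> dist z y" for z
    using abs_dist_diff_le[of z x y] by (simp add: dist_commute)
  have "dist x y < \<rho>"
    using False r by simp
  then obtain \<epsilon> where "\<epsilon> > 0" and \<epsilon>: "\<And>z. dist z y < \<epsilon> \<Longrightarrow>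
      \<bar>?u z - ?u y\<bar> \<le> \<bar>min 1 (dist x z / r) - min 1 (dist x y / r)\<bar>"
    using radial_cutoff_local_bound[OF S, where r = r] by metis
  show ?thesis
  proof (cases "dist x y < 2 * r")
    case True
    have "ennreal \<bar>?u z - ?u y\<bar> \<le> ?g y * ennreal (dist z y)" if "dist z y < \<epsilon>" for z
    proof -
      have "\<bar>?u z - ?u y\<bar> \<le> \<bar>dist x z - dist x y\<bar> / r"
        using \<epsilon>[OF that] abs_min_1_divide_diff_le[OF r(1)] by (rule order_trans)
      also have "\<dots> \<le> 1 / r * dist z y"
        using d_near[of z] r by (simp add: divide_right_mono)
      finally have "ennreal \<bar>?u z - ?u y\<bar> \<le> ennreal (1 / r * dist z y)"
        by (rule ennreal_leI)
      also have "\<dots> = ennreal (1 / r) * ennreal (dist z y)"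
        by (rule ennreal_mult) (use r in auto)
      also have "\<dots> = ?g y * ennreal (dist z y)"
        using True by (simp add: cutoff_gradient_def)
      finally show ?thesis .
    qed
    then show ?thesis
      using \<open>\<epsilon> > 0\<close> by blast
  next
    case False
    have "?u z = ?u y" if "dist z y < min \<epsilon> r" for z
    proof -
      have "r \<le> dist x z"
        using d_near[of z] that False by (simp add: abs_le_iff)
      then have "min 1 (dist x z / r) = 1" "min 1 (dist x y / r) = 1"
        using False r by simp_all
      then show ?thesis
        using \<epsilon>[of z] that by simp
    qed
    moreover have "0 < min \<epsilon> r"
      using \<open>\<epsilon> > 0\<close> r by simp
    ultimately show ?thesis
      by (metis abs_0 diff_self ennreal_0 zero_le)
  qed
qed

lemma upper_gradient_radial_cutoff:
  fixes x :: "'a::metric_space"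
  assumes S: "open S1" "open S2" "ball x \<rho> - {x} \<subseteq> S1 \<union> S2" "S1 \<inter> S2 \<inter> (ball x \<rho> - {x}) = {}"
    and r: "0 < r" "2 * r \<le> R" "R < \<rho>"
  shows "upper_gradient (radial_cutoff S1 x r) (cutoff_gradient x r R)"
proof (rule upper_gradientI_local)
  have [measurable]: "(\<lambda>z. dist x z) \<in> borel_measurable borel"
    by (intro borel_measurable_continuous_onI continuous_intros)
  show "cutoff_gradient x r R \<in> borel_measurable borel"
    unfolding cutoff_gradient_def by measurable
  fix y
  obtain \<epsilon>1 where "\<epsilon>1 > 0" "\<forall>z. dist z y < \<epsilon>1 \<longrightarrow> cutoff_gradient x r R y \<le> cutoff_gradient x r R z"
    using cutoff_gradient_locally_ge[OF r(2)] by blast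
  moreover obtain \<epsilon>2 where "\<epsilon>2 > 0" "\<forall>z. dist z y < \<epsilon>2 \<longrightarrow>
      ennreal \<bar>radial_cutoff S1 x r z - radial_cutoff S1 x r y\<bar> \<le> cutoff_gradient x r R y * ennreal (dist z y)"
    using radial_cutoff_locally_lipschitz[OF S r] by blast
  ultimately show "\<exists>\<epsilon>>0. \<forall>z. dist z y < \<epsilon> \<longrightarrow> cutoff_gradient x r R y \<le> cutoff_gradient x r R z \<and>
      ennreal \<bar>radial_cutoff S1 x r z - radial_cutoff S1 x r y\<bar> \<le> cutoff_gradient x r R y * ennreal (dist z y)"
    by (intro exI[of _ "min \<epsilon>1 \<epsilon>2"]) auto
qed

lemma emeasure_open_pos:
  fixes M :: "'a::metric_space measure"
  assumes "sets M = sets borel" "\<And>r. 0 < r \<Longrightarrow> 0 < emeasure M (ball a r)" "open E" "a \<in> E"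
  shows "0 < emeasure M E"
proof -
  obtain e where "e > 0" "ball a e \<subseteq> E"
    using openE[OF assms(3,4)] by blast
  moreover have "E \<in> sets M"
    using assms(1,3) by simp
  ultimately show ?thesis
    using assms(2)[of e] emeasure_mono[of "ball a e" E M] by (simp add: less_le_trans)
qed

lemma enn_powr_ennreal: "0 \<le> a \<Longrightarrow> enn_powr (ennreal a) q = ennreal (a powr q)"
  by (simp add: enn_powr_def)

lemma powr_le_of_le_mult_powr:
  fixes A K Q p :: real
  assumes "0 < K" "0 \<le> A" "0 \<le> Q" "0 < p" "A \<le> K * Q powr (1 / p)"
  shows "(A / K) powr p \<le> Q"
proof -
  have "(A / K) powr p \<le> (Q powr (1 / p)) powr p"
    using assms by (intro powr_mono2) (auto simp: field_simps)
  also have "\<dots> = Q"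
    using assms by (simp add: powr_powr)
  finally show ?thesis .
qed

lemma min_emeasure_le_nn_integral_abs_diff:
  assumes [measurable]: "E1 \<in> sets M" "E2 \<in> sets M"
    and "E1 \<subseteq> B" "E2 \<subseteq> B" "\<And>y. y \<in> E1 \<Longrightarrow> u y = 1" "\<And>y. y \<in> E2 \<Longrightarrow> u y = 0"
  shows "min (emeasure M E1) (emeasure M E2) \<le> (\<integral>\<^sup>+y\<in>B. ennreal \<bar>u y - c\<bar> \<partial>M)"
proof -
  let ?m = "min (emeasure M E1) (emeasure M E2)"
  have "1 \<le> \<bar>1 - c\<bar> + \<bar>c\<bar>"
    by linarith
  then have "?m \<le> ennreal (\<bar>1 - c\<bar> + \<bar>c\<bar>) * ?m"
    using mult_right_mono[of 1 "ennreal (\<bar>1 - c\<bar> + \<bar>c\<bar>)" ?m] ennreal_leI by fastforce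
  also have "\<dots> = ennreal \<bar>1 - c\<bar> * ?m + ennreal \<bar>c\<bar> * ?m"
    by (simp add: ennreal_plus distrib_right)
  also have "\<dots> \<le> ennreal \<bar>1 - c\<bar> * emeasure M E1 + ennreal \<bar>c\<bar> * emeasure M E2"
    by (intro add_mono mult_left_mono) auto
  also have "\<dots> = (\<integral>\<^sup>+y. ennreal \<bar>1 - c\<bar> * indicator E1 y + ennreal \<bar>c\<bar> * indicator E2 y \<partial>M)"
    by (simp add: nn_integral_add nn_integral_cmult_indicator)
  also have "\<dots> \<le> (\<integral>\<^sup>+y\<in>B. ennreal \<bar>u y - c\<bar> \<partial>M)"
  proof (intro nn_integral_mono)
    have "E1 \<inter> E2 = {}"
      using assms(5,6) by force
    then show "ennreal \<bar>1 - c\<bar> * indicator E1 y + ennreal \<bar>c\<bar> * indicator E2 y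
        \<le> ennreal \<bar>u y - c\<bar> * indicator B y" for y
      using assms(3-6) by (auto simp: indicator_def abs_minus_commute)
  qed
  finally show ?thesis .
qed

lemma poincare_1p_level_sets:
  assumes "poincare_1p M p" "0 < R"
  obtains C where "C > 0"
    and "\<And>x r u g E1 E2. 0 < r \<Longrightarrow> r \<le> R \<Longrightarrow> u \<in> borel_measurable M \<Longrightarrow> upper_gradient u g \<Longrightarrow>
      E1 \<in> sets M \<Longrightarrow> E2 \<in> sets M \<Longrightarrow> E1 \<subseteq> ball x r \<Longrightarrow> E2 \<subseteq> ball x r \<Longrightarrow>
      (\<And>y. y \<in> E1 \<Longrightarrow> u y = 1) \<Longrightarrow> (\<And>y. y \<in> E2 \<Longrightarrow> u y = 0) \<Longrightarrow>
      min (emeasure M E1) (emeasure M E2) / emeasure M (ball x r)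
        \<le> ennreal (C * r) * enn_powr ((\<integral>\<^sup>+y\<in>ball x r. enn_powr (g y) p \<partial>M) / emeasure M (ball x r)) (1 / p)"
proof -
  obtain C where "C > 0" and PI: "\<forall>x r u g. 0 < r \<and> r \<le> R \<and> u \<in> borel_measurable M \<and>
      upper_gradient u g \<longrightarrow>
      (\<integral>\<^sup>+y\<in>ball x r. ennreal \<bar>u y - ball_mean M (ball x r) u\<bar> \<partial>M) / emeasure M (ball x r)
        \<le> ennreal (C * r) * enn_powr ((\<integral>\<^sup>+y\<in>ball x r. enn_powr (g y) p \<partial>M) / emeasure M (ball x r)) (1 / p)"
    using assms(1)[unfolded poincare_1p_def, rule_format, OF assms(2)] by blast
  show thesis
  proof (rule that[OF \<open>C > 0\<close>])
    fix x r u g E1 E2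
    assume r: "0 < r" "r \<le> R" and u: "u \<in> borel_measurable M" "upper_gradient u g"
      and E: "E1 \<in> sets M" "E2 \<in> sets M" "E1 \<subseteq> ball x r" "E2 \<subseteq> ball x r"
        "\<And>y. y \<in> E1 \<Longrightarrow> u y = 1" "\<And>y. y \<in> E2 \<Longrightarrow> u y = 0"
    have "min (emeasure M E1) (emeasure M E2) / emeasure M (ball x r)
        \<le> (\<integral>\<^sup>+y\<in>ball x r. ennreal \<bar>u y - ball_mean M (ball x r) u\<bar> \<partial>M) / emeasure M (ball x r)"
      by (rule divide_right_mono_ennreal[OF min_emeasure_le_nn_integral_abs_diff[OF E]])
    also have "\<dots> \<le> ennreal (C * r) *
        enn_powr ((\<integral>\<^sup>+y\<in>ball x r. enn_powr (g y) p \<partial>M) / emeasure M (ball x r)) (1 / p)"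
      using r u by (simp add: PI)
    finally show "min (emeasure M E1) (emeasure M E2) / emeasure M (ball x r)
        \<le> ennreal (C * r) * enn_powr ((\<integral>\<^sup>+y\<in>ball x r. enn_powr (g y) p \<partial>M) / emeasure M (ball x r)) (1 / p)" .
  qed
qed

lemma set_nn_integral_cutoff_gradient_powr:
  fixes M :: "'a::metric_space measure"
  assumes "sets M = sets borel" "0 < r" "2 * r \<le> R"
  shows "(\<integral>\<^sup>+y\<in>ball x R. enn_powr (cutoff_gradient x r R y) p \<partial>M)
    = ennreal ((1 / r) powr p) * emeasure M (ball x (2 * r))"
proof -
  have "(\<integral>\<^sup>+y\<in>ball x R. enn_powr (cutoff_gradient x r R y) p \<partial>M)
      = (\<integral>\<^sup>+y. ennreal ((1 / r) powr p) * indicator (ball x (2 * r)) y \<partial>M)"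
  proof (intro nn_integral_cong)
    fix y
    show "enn_powr (cutoff_gradient x r R y) p * indicator (ball x R) y
        = ennreal ((1 / r) powr p) * indicator (ball x (2 * r)) y"
      using assms(2,3) by (cases "dist x y < 2 * r"; cases "dist x y < R")
        (simp_all add: cutoff_gradient_def enn_powr_def indicator_def)
  qed
  also have "\<dots> = ennreal ((1 / r) powr p) * emeasure M (ball x (2 * r))"
    using assms(1) by (intro nn_integral_cmult_indicator) simp
  finally show ?thesis .
qed

lemma poincare_1p_radial_cutoff:
  fixes M :: "'a::metric_space measure" and x :: 'a
  assumes sets_M: "sets M = sets borel" and PI: "poincare_1p M p"
    and S: "open S1" "open S2" "ball x \<rho> - {x} \<subseteq> S1 \<union> S2" "S1 \<inter> S2 \<inter> (ball x \<rho> - {x}) = {}"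
    and R: "0 < R" "R < \<rho>"
  obtains C where "C > 0"
    and "\<And>E1 E2 s. 0 < s \<Longrightarrow> s \<le> R \<Longrightarrow> E1 \<in> sets M \<Longrightarrow> E2 \<in> sets M \<Longrightarrow>
      E1 \<subseteq> S1 \<inter> ball x R - ball x (s / 2) \<Longrightarrow> E2 \<subseteq> S2 \<inter> ball x R - {x} \<Longrightarrow>
      min (emeasure M E1) (emeasure M E2) / emeasure M (ball x R)
        \<le> ennreal (C * R) *
          enn_powr (ennreal ((2 / s) powr p) * emeasure M (ball x s) / emeasure M (ball x R)) (1 / p)"
proof (rule poincare_1p_level_sets[OF PI R(1)])
  fix C
  assume "C > 0"
    and level: "\<And>x r u g E1 E2. 0 < r \<Longrightarrow> r \<le> R \<Longrightarrow> u \<in> borel_measurable M \<Longrightarrow> upper_gradient u g \<Longrightarrow>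
      E1 \<in> sets M \<Longrightarrow> E2 \<in> sets M \<Longrightarrow> E1 \<subseteq> ball x r \<Longrightarrow> E2 \<subseteq> ball x r \<Longrightarrow>
      (\<And>y. y \<in> E1 \<Longrightarrow> u y = 1) \<Longrightarrow> (\<And>y. y \<in> E2 \<Longrightarrow> u y = 0) \<Longrightarrow>
      min (emeasure M E1) (emeasure M E2) / emeasure M (ball x r)
        \<le> ennreal (C * r) * enn_powr ((\<integral>\<^sup>+y\<in>ball x r. enn_powr (g y) p \<partial>M) / emeasure M (ball x r)) (1 / p)"
  show thesis
  proof (rule that[OF \<open>C > 0\<close>])
    fix E1 E2 s
    assume s: "0 < s" "s \<le> R" and E: "E1 \<in> sets M" "E2 \<in> sets M"
      and E1: "E1 \<subseteq> S1 \<inter> ball x R - ball x (s / 2)" and E2: "E2 \<subseteq> S2 \<inter> ball x R - {x}"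
    let ?u = "radial_cutoff S1 x (s / 2)" and ?g = "cutoff_gradient x (s / 2) R"
    have [measurable]: "S1 \<in> sets borel"
      using S(1) by simp
    have [measurable]: "(\<lambda>z. dist x z) \<in> borel_measurable borel"
      by (intro borel_measurable_continuous_onI continuous_intros)
    have u_meas: "?u \<in> borel_measurable M"
      unfolding measurable_cong_sets[OF sets_M refl] radial_cutoff_def by measurable
    have u_grad: "upper_gradient ?u ?g"
      using s R by (intro upper_gradient_radial_cutoff[OF S]) auto
    have u_E1: "?u y = 1" if "y \<in> E1" for y
      using that E1 s by (auto simp: radial_cutoff_def field_simps)
    have u_E2: "?u y = 0" if "y \<in> E2" for y
    proof -
      have "y \<in> S2" "y \<in> ball x \<rho> - {x}"
        using that E2 R by auto
      then have "y \<notin> S1"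
        using S(4) by blast
      then show ?thesis
        by (simp add: radial_cutoff_def)
    qed
    have "min (emeasure M E1) (emeasure M E2) / emeasure M (ball x R)
        \<le> ennreal (C * R) * enn_powr ((\<integral>\<^sup>+y\<in>ball x R. enn_powr (?g y) p \<partial>M) / emeasure M (ball x R)) (1 / p)"
      by (rule level[where u = ?u and g = ?g]) (use R E E1 E2 u_meas u_grad u_E1 u_E2 in auto)
    also have "(\<integral>\<^sup>+y\<in>ball x R. enn_powr (?g y) p \<partial>M) = ennreal ((2 / s) powr p) * emeasure M (ball x s)"
      using set_nn_integral_cutoff_gradient_powr[OF sets_M, of "s / 2" R x p] s by simp
    finally show "min (emeasure M E1) (emeasure M E2) / emeasure M (ball x R)
        \<le> ennreal (C * R) *
          enn_powr (ennreal ((2 / s) powr p) * emeasure M (ball x s) / emeasure M (ball x R)) (1 / p)" .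
  qed
qed

lemma density_bound_of_poincare_bound:
  fixes a b K v s p :: real
  assumes "0 < a" "0 < b" "0 < K" "0 \<le> v" "0 < s" "0 < p"
    and "ennreal a / ennreal b
      \<le> ennreal K * enn_powr (ennreal ((2 / s) powr p) * ennreal v / ennreal b) (1 / p)"
  shows "ennreal ((a / b / K) powr p * b / 2 powr p) \<le> ennreal v / ennreal (s powr p)"
proof -
  define Q where "Q = (2 / s) powr p * v / b"
  have "ennreal (a / b) \<le> ennreal (K * Q powr (1 / p))"
    using assms by (simp add: Q_def divide_ennreal ennreal_mult[symmetric] enn_powr_ennreal)
  then have "a / b \<le> K * Q powr (1 / p)"
    using assms(3) by (simp add: ennreal_le_iff)
  then have "(a / b / K) powr p \<le> Q"
    using assms by (intro powr_le_of_le_mult_powr) (auto simp: Q_def)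
  then have "(a / b / K) powr p * b / 2 powr p \<le> Q * b / 2 powr p"
    using assms(2) by (simp add: divide_right_mono)
  also have "\<dots> = v / s powr p"
    using assms by (simp add: Q_def powr_divide)
  finally show ?thesis
    using assms by (simp add: divide_ennreal ennreal_leI)
qed

lemma Liminf_density_pos_of_poincare_bound:
  fixes A B :: ennreal and V :: "real \<Rightarrow> ennreal" and K p \<delta> :: real
  assumes A: "0 < A" "A \<le> B" "B < \<infinity>" and "0 < K" "0 < p" "0 < \<delta>"
    and V: "\<And>s. 0 < s \<Longrightarrow> V s < \<infinity>"
    and bound: "\<And>s. 0 < s \<Longrightarrow> s < \<delta> \<Longrightarrow>
      A / B \<le> ennreal K * enn_powr (ennreal ((2 / s) powr p) * V s / B) (1 / p)"
  shows "0 < Liminf (at_right 0) (\<lambda>s. V s / ennreal (s powr p))"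
proof -
  define a where "a = enn2real A"
  define b where "b = enn2real B"
  have ab: "A = ennreal a" "0 < a" "B = ennreal b" "0 < b"
    using A by (auto simp: a_def b_def enn2real_positive_iff)
  define c where "c = (a / b / K) powr p * b / 2 powr p"
  have "ennreal c \<le> V s / ennreal (s powr p)" if s: "0 < s" "s < \<delta>" for s
  proof -
    have "V s = ennreal (enn2real (V s))"
      using V[OF s(1)] by simp
    then show ?thesis
      using bound[OF s] density_bound_of_poincare_bound[of a b K "enn2real (V s)" s p] ab s assms
      unfolding c_def by simp
  qed
  then have "\<forall>\<^sub>F s in at_right 0. ennreal c \<le> V s / ennreal (s powr p)"
    using \<open>0 < \<delta>\<close> by (auto simp: eventually_at_right_field intro!: exI[of _ \<delta>])
  then have "ennreal c \<le> Liminf (at_right 0) (\<lambda>s. V s / ennreal (s powr p))"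
    by (rule Liminf_bounded)
  moreover have "0 < c"
    using ab \<open>0 < K\<close> by (simp add: c_def)
  ultimately show ?thesis
    using ennreal_less_zero_iff less_le_trans by blast
qed

lemma separated_ball_Liminf_density_pos:
  fixes M :: "'a::metric_space measure" and x :: 'a
  assumes sets_M: "sets M = sets borel"
    and balls: "\<And>z r. 0 < r \<Longrightarrow> 0 < emeasure M (ball z r) \<and> emeasure M (ball z r) < \<infinity>"
    and p: "0 < p" and PI: "poincare_1p M p"
    and S: "open S1" "open S2" "ball x \<rho> - {x} \<subseteq> S1 \<union> S2" "S1 \<inter> S2 \<inter> (ball x \<rho> - {x}) = {}"
    and a1: "a1 \<in> S1 \<inter> ball x (\<rho> / 2) - {x}" and a2: "a2 \<in> S2 \<inter> ball x (\<rho> / 2) - {x}"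
  shows "0 < Liminf (at_right 0) (\<lambda>s. emeasure M (ball x s) / ennreal (s powr p))"
proof -
  define R where "R = \<rho> / 2"
  have R: "0 < R" "R < \<rho>" "dist x a1 < R"
    using a1 zero_le_dist[of x a1] unfolding R_def by (auto simp del: zero_le_dist)
  obtain C where "C > 0"
    and bound: "\<And>E1 E2 s. 0 < s \<Longrightarrow> s \<le> R \<Longrightarrow> E1 \<in> sets M \<Longrightarrow> E2 \<in> sets M \<Longrightarrow>
      E1 \<subseteq> S1 \<inter> ball x R - ball x (s / 2) \<Longrightarrow> E2 \<subseteq> S2 \<inter> ball x R - {x} \<Longrightarrow>
      min (emeasure M E1) (emeasure M E2) / emeasure M (ball x R)
        \<le> ennreal (C * R) *
          enn_powr (ennreal ((2 / s) powr p) * emeasure M (ball x s) / emeasure M (ball x R)) (1 / p)"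
    using poincare_1p_radial_cutoff[OF sets_M PI S R(1,2)] by blast
  \<comment> \<open>Cutting out a ball around \<open>x\<close> makes the cutoffs equal to 1 on \<open>E1\<close> for all radii below \<open>dist x a1\<close>.\<close>
  define E1 where "E1 = S1 \<inter> ball x R - cball x (dist x a1 / 2)"
  define E2 where "E2 = S2 \<inter> ball x R - {x}"
  have "open E1" "open E2"
    using S(1,2) by (auto simp: E1_def E2_def intro!: open_Diff open_Int simp: open_delete)
  then have E: "E1 \<in> sets M" "E2 \<in> sets M"
    using sets_M by simp_all
  have "0 < emeasure M E1" "0 < emeasure M E2"
    using emeasure_open_pos[OF sets_M _ \<open>open E1\<close>, of a1] emeasure_open_pos[OF sets_M _ \<open>open E2\<close>, of a2]
      balls a1 a2 R(3) by (auto simp: E1_def E2_def R_def)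
  moreover have "emeasure M E1 \<le> emeasure M (ball x R)"
    using sets_M by (intro emeasure_mono) (auto simp: E1_def)
  ultimately show ?thesis
  proof (intro Liminf_density_pos_of_poincare_bound[where \<delta> = "dist x a1"])
    fix s
    assume s: "0 < s" "s < dist x a1"
    have E1_sub: "E1 \<subseteq> S1 \<inter> ball x R - ball x (s / 2)"
      using s by (auto simp: E1_def)
    show "min (emeasure M E1) (emeasure M E2) / emeasure M (ball x R)
        \<le> ennreal (C * R) *
          enn_powr (ennreal ((2 / s) powr p) * emeasure M (ball x s) / emeasure M (ball x R)) (1 / p)"
      by (rule bound[OF s(1) _ E E1_sub]) (use s R in \<open>auto simp: E2_def\<close>)
  qed (use balls R a1 \<open>C > 0\<close> p in \<open>auto simp: min_le_iff_disj\<close>)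
qed

lemma connected_separation_meets_punctured_ball:
  fixes x :: "'a::metric_space"
  assumes "connected U" "open S1" "open S2" "U - {x} \<subseteq> S1 \<union> S2" "S1 \<inter> S2 \<inter> (U - {x}) = {}"
    "S1 \<inter> (U - {x}) \<noteq> {}" "S2 \<inter> (U - {x}) \<noteq> {}" "0 < \<epsilon>"
  shows "S1 \<inter> ball x \<epsilon> \<inter> U - {x} \<noteq> {}"
proof
  assume empty: "S1 \<inter> ball x \<epsilon> \<inter> U - {x} = {}"
  have "open (S1 - {x})" "open (S2 \<union> ball x \<epsilon>)"
    using assms(2,3) by (auto simp: open_delete)
  moreover have "U \<subseteq> (S1 - {x}) \<union> (S2 \<union> ball x \<epsilon>)"
    using assms(4,8) by auto
  moreover have "(S1 - {x}) \<inter> (S2 \<union> ball x \<epsilon>) \<inter> U = {}"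
    using assms(5) empty by auto
  moreover have "(S1 - {x}) \<inter> U \<noteq> {}" "(S2 \<union> ball x \<epsilon>) \<inter> U \<noteq> {}"
    using assms(6,7) by auto
  ultimately have "\<not> connected U"
    unfolding connected_def by blast
  then show False
    using assms(1) by simp
qed

lemma local_cut_point_separation:
  fixes x :: "'a::metric_space"
  assumes "local_cut_point x"
  obtains \<rho> S1 S2 a1 a2 where "open S1" "open S2" "ball x \<rho> - {x} \<subseteq> S1 \<union> S2"
    "S1 \<inter> S2 \<inter> (ball x \<rho> - {x}) = {}"
    "a1 \<in> S1 \<inter> ball x (\<rho> / 2) - {x}" "a2 \<in> S2 \<inter> ball x (\<rho> / 2) - {x}"
proof -
  obtain U where U: "connected U" "x \<in> interior U" "\<not> connected (U - {x})"
    using assms unfolding local_cut_point_def by blast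
  obtain \<rho> where "0 < \<rho>" "ball x \<rho> \<subseteq> U"
    using U(2) mem_interior by blast
  obtain S1 S2 where S: "open S1" "open S2" "U - {x} \<subseteq> S1 \<union> S2" "S1 \<inter> S2 \<inter> (U - {x}) = {}"
    "S1 \<inter> (U - {x}) \<noteq> {}" "S2 \<inter> (U - {x}) \<noteq> {}"
    using U(3) unfolding connected_def by blast
  have "S1 \<inter> ball x (\<rho> / 2) \<inter> U - {x} \<noteq> {}"
    using \<open>0 < \<rho>\<close> by (intro connected_separation_meets_punctured_ball[OF U(1) S]) simp
  moreover have "S2 \<inter> ball x (\<rho> / 2) \<inter> U - {x} \<noteq> {}"
    using S \<open>0 < \<rho>\<close> by (intro connected_separation_meets_punctured_ball[OF U(1)]) auto
  moreover have "ball x \<rho> - {x} \<subseteq> S1 \<union> S2" "S1 \<inter> S2 \<inter> (ball x \<rho> - {x}) = {}"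
    using S(3,4) \<open>ball x \<rho> \<subseteq> U\<close> by auto
  ultimately show thesis
    using that S(1,2) by blast
qed

theorem theorem1p3:
  fixes M :: "'a::{metric_space, complete_space} measure" and p :: real and x :: 'a
  assumes "locally_compact_space (euclidean :: 'a topology)"
    and "length_space TYPE('a)"
    and "sets M = sets borel"
    and "\<And>z r. 0 < r \<Longrightarrow> 0 < emeasure M (ball z r) \<and> emeasure M (ball z r) < \<infinity>"
    and "1 \<le> p"
    and "poincare_1p M p"
    and "Liminf (at_right 0) (\<lambda>r. emeasure M (ball x r) / ennreal (r powr p)) = 0"
  shows "\<not> local_cut_point x"
proof
  assume "local_cut_point x"
  then obtain \<rho> S1 S2 a1 a2 where S: "open S1" "open S2" "ball x \<rho> - {x} \<subseteq> S1 \<union> S2"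
      "S1 \<inter> S2 \<inter> (ball x \<rho> - {x}) = {}"
    and a: "a1 \<in> S1 \<inter> ball x (\<rho> / 2) - {x}" "a2 \<in> S2 \<inter> ball x (\<rho> / 2) - {x}"
    by (rule local_cut_point_separation)
  have "0 < p"
    using assms(5) by simp
  from separated_ball_Liminf_density_pos[OF assms(3,4) this assms(6) S a]
  show False
    using assms(7) by simp
qed

end
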